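(* Let $b'>b>1$. For every instance, the partially naive (pessimistic) agent with true bias $b$ and believed bias $b'$ satisfies $C_p(s)\le b'\cdot C_o(s)$; that is, its cost ratio is at most $b'$.
   Context: An instance is a finite directed acyclic graph $G=(V,E)$ with nonnegative edge costs $c(u,v)$, start node $s$ and target node $t$, where $t$ is the unique node with no outgoing edges; $C_o(u)$ is the minimum cost of a $u$–$t$ path. The sophisticated agent with bias $b'$ is defined by $C_s'(t)=0$ and, for $u\ne t$, $S_s'(u)\in\arg\min_{v:(u,v)\in E}(b'\,c(u,v)+C_s'(v))$, $C_s'(u)=c(u,S_s'(u))+C_s'(S_s'(u))$. The partially naive agent with true bias $b$ and believed bias $b'$: $C_p(t)=0$, and for $u\neq t$, $S_p(u)\in\arg\min_{v:(u,v)\in E}(b\,c(u,v)+C_s'(v))$, $C_p(u)=c(u,S_p(u))+C_p(S_p(u))$; its incurred cost is $C_p(s)$, and its cost ratio is $C_p(s)/C_o(s)$. *)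

theory Defs
  imports Main Complex_Main
begin

definition dag_instance :: "'a set \<Rightarrow> ('a \<times> 'a) set \<Rightarrow> ('a \<Rightarrow> 'a \<Rightarrow> real) \<Rightarrow> 'a \<Rightarrow> 'a \<Rightarrow> bool" where
  "dag_instance V E c s t \<longleftrightarrow>
     finite V \<and> E \<subseteq> V \<times> V \<and> acyclic E \<and>
     (\<forall>(u,v)\<in>E. 0 \<le> c u v) \<and> s \<in> V \<and> t \<in> V \<and>
     (\<forall>u\<in>V. (\<nexists>v. (u,v) \<in> E) \<longleftrightarrow> u = t)"

definition is_path :: "('a \<times> 'a) set \<Rightarrow> 'a \<Rightarrow> 'a \<Rightarrow> 'a list \<Rightarrow> bool" where
  "is_path E u v xs \<longleftrightarrow> xs \<noteq> [] \<and> hd xs = u \<and> last xs = v \<and>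
     (\<forall>i. Suc i < length xs \<longrightarrow> (xs ! i, xs ! Suc i) \<in> E)"

definition path_cost :: "('a \<Rightarrow> 'a \<Rightarrow> real) \<Rightarrow> 'a list \<Rightarrow> real" where
  "path_cost c xs = (\<Sum>i<length xs - 1. c (xs ! i) (xs ! Suc i))"

text \<open>Minimum cost of a u-t path (the set of such paths is finite in a finite DAG).\<close>
definition opt_cost :: "('a \<times> 'a) set \<Rightarrow> ('a \<Rightarrow> 'a \<Rightarrow> real) \<Rightarrow> 'a \<Rightarrow> 'a \<Rightarrow> real" where
  "opt_cost E c t u = Min {path_cost c xs | xs. is_path E u t xs}"

text \<open>(Ss, Cs) is a valid sophisticated agent with bias bb (any tie-breaking).\<close>
definition soph_agent :: "'a set \<Rightarrow> ('a \<times> 'a) set \<Rightarrow> ('a \<Rightarrow> 'a \<Rightarrow> real) \<Rightarrow> 'a \<Rightarrow> real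
    \<Rightarrow> ('a \<Rightarrow> 'a) \<Rightarrow> ('a \<Rightarrow> real) \<Rightarrow> bool" where
  "soph_agent V E c t bb Ss Cs \<longleftrightarrow>
     Cs t = 0 \<and>
     (\<forall>u \<in> V - {t}. (u, Ss u) \<in> E \<and>
        (\<forall>v. (u, v) \<in> E \<longrightarrow> bb * c u (Ss u) + Cs (Ss u) \<le> bb * c u v + Cs v) \<and>
        Cs u = c u (Ss u) + Cs (Ss u))"

text \<open>(Sp, Cp) is a valid partially naive agent with true bias b, planning with
  the sophisticated costs Cs' for believed bias b'.\<close>
definition pnaive_agent :: "'a set \<Rightarrow> ('a \<times> 'a) set \<Rightarrow> ('a \<Rightarrow> 'a \<Rightarrow> real) \<Rightarrow> 'a \<Rightarrow> real
    \<Rightarrow> ('a \<Rightarrow> real) \<Rightarrow> ('a \<Rightarrow> 'a) \<Rightarrow> ('a \<Rightarrow> real) \<Rightarrow> bool" where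
  "pnaive_agent V E c t b Cs' Sp Cp \<longleftrightarrow>
     Cp t = 0 \<and>
     (\<forall>u \<in> V - {t}. (u, Sp u) \<in> E \<and>
        (\<forall>v. (u, v) \<in> E \<longrightarrow> b * c u (Sp u) + Cs' (Sp u) \<le> b * c u v + Cs' v) \<and>
        Cp u = c u (Sp u) + Cp (Sp u))"

end

theory Submission
  imports Defs
begin

text \<open>Two inductions along the DAG give \<open>Cp \<le> Cs'\<close> and \<open>Cs' u \<le> b' * path_cost c xs\<close>
  for every \<open>u\<close>-\<open>t\<close> path \<open>xs\<close>; applied to an optimal path they yield the bound.
  For the first, both agents rank the edges out of a node against the same continuation costs
  \<open>Cs'\<close>. Since \<open>b < b'\<close>, the edge preferred under the smaller bias \<open>b\<close> is at least as
  costly as the one preferred under \<open>b'\<close>, so lowering the weight from \<open>b\<close> to \<open>1\<close> keeps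
  it preferred, i.e. its true total cost is no larger.
  For the second, \<open>b' c(u, Ss' u) + Cs'(Ss' u)\<close> is bounded by the \<open>b'\<close>-weighted cost of the
  path's own first edge plus \<open>Cs'\<close> of its second vertex, and \<open>b' \<ge> 1\<close> with \<open>c \<ge> 0\<close>.\<close>

lemma is_path_Cons_Cons_iff:
  "is_path E u t (x # v # ys) \<longleftrightarrow> x = u \<and> (u, v) \<in> E \<and> is_path E v t (v # ys)"
proof -
  have "(\<forall>i. Suc i < length (x # v # ys) \<longrightarrow> ((x # v # ys) ! i, (x # v # ys) ! Suc i) \<in> E)
        \<longleftrightarrow> (x, v) \<in> E \<and> (\<forall>i. Suc i < length (v # ys) \<longrightarrow> ((v # ys) ! i, (v # ys) ! Suc i) \<in> E)"
    by (auto simp: All_less_Suc2 less_Suc_eq_0_disj)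
  then show ?thesis
    unfolding is_path_def by auto
qed

lemma is_path_singleton_iff: "is_path E u t [x] \<longleftrightarrow> x = u \<and> u = t"
  unfolding is_path_def by auto

lemma is_path_Cons:
  assumes "(u, v) \<in> E" and "is_path E v t xs"
  shows "is_path E u t (u # xs)"
proof -
  obtain ys where "xs = v # ys"
    using assms(2) unfolding is_path_def by (cases xs) auto
  then show ?thesis
    using assms by (simp add: is_path_Cons_Cons_iff)
qed

lemma path_cost_Cons_Cons: "path_cost c (u # v # ys) = c u v + path_cost c (v # ys)"
  unfolding path_cost_def by (simp add: sum.lessThan_Suc_shift del: sum.lessThan_Suc)

lemma path_cost_singleton: "path_cost c [x] = 0"
  unfolding path_cost_def by simp

lemma is_path_nth_trancl:
  assumes "is_path E u t xs" and "i < j" and "j < length xs"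
  shows "(xs ! i, xs ! j) \<in> E\<^sup>+"
  using assms(2,3)
proof (induction j)
  case (Suc j)
  have "(xs ! j, xs ! Suc j) \<in> E"
    using assms(1) Suc.prems unfolding is_path_def by blast
  with Suc show ?case
    by (cases "i = j") auto
qed simp

lemma is_path_distinct:
  assumes "acyclic E" and "is_path E u t xs"
  shows "distinct xs"
  unfolding distinct_conv_nth
proof (intro allI impI)
  fix i j
  assume "i < length xs" "j < length xs" "i \<noteq> j"
  then have "(xs ! min i j, xs ! max i j) \<in> E\<^sup>+"
    using is_path_nth_trancl[OF assms(2)] by (simp add: min_def max_def)
  with assms(1) show "xs ! i \<noteq> xs ! j"
    unfolding acyclic_def by (metis max_def min_def)
qed

lemma is_path_set_subset:
  assumes "E \<subseteq> V \<times> V" and "u \<in> V" and "is_path E u t xs"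
  shows "set xs \<subseteq> V"
proof
  fix x
  assume "x \<in> set xs"
  then obtain i where i: "i < length xs" "x = xs ! i"
    by (metis in_set_conv_nth)
  show "x \<in> V"
  proof (cases i)
    case 0
    then show ?thesis
      using assms(2,3) i unfolding is_path_def by (metis hd_conv_nth)
  next
    case (Suc k)
    then have "(xs ! k, xs ! i) \<in> E"
      using assms(3) i unfolding is_path_def by blast
    then show ?thesis
      using assms(1) i by auto
  qed
qed

lemma dag_instance_wf_converse:
  assumes "dag_instance V E c s t"
  shows "wf (E\<inverse>)"
proof -
  have "finite V" and "E \<subseteq> V \<times> V" and "acyclic E"
    using assms unfolding dag_instance_def by simp_all
  then have "finite E"
    using finite_subset by blast
  then show ?thesis
    using \<open>acyclic E\<close> by (rule finite_acyclic_wf_converse)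
qed

lemma dag_instance_finite_paths:
  assumes "dag_instance V E c s t" and "u \<in> V"
  shows "finite {xs. is_path E u t xs}"
proof (rule finite_subset)
  have "finite V" and EV: "E \<subseteq> V \<times> V" and "acyclic E"
    using assms(1) unfolding dag_instance_def by simp_all
  show "{xs. is_path E u t xs} \<subseteq> {xs. set xs \<subseteq> V \<and> distinct xs}"
    using is_path_set_subset[OF EV assms(2)] is_path_distinct[OF \<open>acyclic E\<close>] by blast
  show "finite {xs. set xs \<subseteq> V \<and> distinct xs}"
    using \<open>finite V\<close> by (rule finite_subset_distinct)
qed

lemma dag_instance_reaches_target:
  assumes "dag_instance V E c s t" and "u \<in> V"
  shows "\<exists>xs. is_path E u t xs"
  using assms(2)
proof (induction u rule: wf_induct_rule[OF dag_instance_wf_converse[OF assms(1)]])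
  case (1 u)
  show ?case
  proof (cases "u = t")
    case True
    then have "is_path E u t [u]"
      by (simp add: is_path_singleton_iff)
    then show ?thesis ..
  next
    case False
    then obtain v where uv: "(u, v) \<in> E"
      using assms(1) "1.prems" unfolding dag_instance_def by blast
    then have "v \<in> V"
      using assms(1) unfolding dag_instance_def by blast
    then obtain xs where "is_path E v t xs"
      using "1.IH" uv by blast
    then show ?thesis
      using is_path_Cons[OF uv] by blast
  qed
qed

lemma opt_cost_attained:
  assumes "dag_instance V E c s t" and "u \<in> V"
  obtains xs where "is_path E u t xs" and "opt_cost E c t u = path_cost c xs"
proof -
  let ?A = "{path_cost c xs | xs. is_path E u t xs}"
  have "finite ?A"
    using dag_instance_finite_paths[OF assms] by (simp add: setcompr_eq_image)
  moreover have "?A \<noteq> {}"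
    using dag_instance_reaches_target[OF assms] by blast
  ultimately have "opt_cost E c t u \<in> ?A"
    unfolding opt_cost_def by (rule Min_in)
  then show ?thesis
    using that by blast
qed

lemma cheaper_under_smaller_bias:
  fixes b b' cv cw Cv Cw :: real
  assumes "1 \<le> b" and "b < b'"
    and "b * cv + Cv \<le> b * cw + Cw" and "b' * cw + Cw \<le> b' * cv + Cv"
  shows "cv + Cv \<le> cw + Cw"
proof -
  have "0 \<le> (b' - b) * (cv - cw)"
    using assms(3,4) by (simp add: algebra_simps)
  then have "cw \<le> cv"
    using assms(2) by (simp add: zero_le_mult_iff)
  then have "cv - cw \<le> b * (cv - cw)"
    using assms(1) mult_right_mono[of 1 b "cv - cw"] by simp
  with assms(3) show ?thesis
    by (simp add: algebra_simps)
qed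

lemma pnaive_cost_le_soph_cost:
  assumes "1 \<le> b" and "b < b'"
    and "dag_instance V E c s t"
    and "soph_agent V E c t b' Ss' Cs'"
    and "pnaive_agent V E c t b Cs' Sp Cp"
    and "u \<in> V"
  shows "Cp u \<le> Cs' u"
  using assms(6)
proof (induction u rule: wf_induct_rule[OF dag_instance_wf_converse[OF assms(3)]])
  case (1 u)
  show ?case
  proof (cases "u = t")
    case True
    then show ?thesis
      using assms(4,5) unfolding soph_agent_def pnaive_agent_def by simp
  next
    case False
    then have u: "u \<in> V - {t}"
      using "1.prems" by blast
    define v w where "v = Sp u" and "w = Ss' u"
    have uv: "(u, v) \<in> E" and Cp_u: "Cp u = c u v + Cp v"
      and naive: "\<forall>x. (u, x) \<in> E \<longrightarrow> b * c u v + Cs' v \<le> b * c u x + Cs' x"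
      using assms(5) u unfolding pnaive_agent_def v_def by blast+
    have uw: "(u, w) \<in> E" and Cs'_u: "Cs' u = c u w + Cs' w"
      and soph: "\<forall>x. (u, x) \<in> E \<longrightarrow> b' * c u w + Cs' w \<le> b' * c u x + Cs' x"
      using assms(4) u unfolding soph_agent_def w_def by blast+
    have "v \<in> V"
      using assms(3) uv unfolding dag_instance_def by blast
    then have "Cp v \<le> Cs' v"
      using "1.IH" uv by blast
    moreover have "c u v + Cs' v \<le> c u w + Cs' w"
      using cheaper_under_smaller_bias[OF assms(1,2) naive[rule_format, OF uw] soph[rule_format, OF uv]] .
    ultimately show ?thesis
      using Cp_u Cs'_u by linarith
  qed
qed

lemma soph_cost_le_biased_path_cost:
  assumes "1 \<le> b'"
    and "dag_instance V E c s t"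
    and "soph_agent V E c t b' Ss' Cs'"
  shows "is_path E u t xs \<Longrightarrow> u \<in> V \<Longrightarrow> Cs' u \<le> b' * path_cost c xs"
proof (induction xs arbitrary: u rule: induct_list012)
  case 1
  then show ?case
    by (simp add: is_path_def)
next
  case (2 x)
  then show ?case
    using assms(3) by (simp add: is_path_singleton_iff path_cost_singleton soph_agent_def)
next
  case (3 x v ys)
  then have x: "x = u" and uv: "(u, v) \<in> E" and path_v: "is_path E v t (v # ys)"
    by (simp_all add: is_path_Cons_Cons_iff)
  have "v \<in> V" and "u \<in> V - {t}" and c_nonneg: "0 \<le> c u (Ss' u)"
    using assms(2,3) uv "3.prems"(2) unfolding dag_instance_def soph_agent_def by blast+
  then have "Cs' u = c u (Ss' u) + Cs' (Ss' u)"
    and "b' * c u (Ss' u) + Cs' (Ss' u) \<le> b' * c u v + Cs' v"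
    using assms(3) uv unfolding soph_agent_def by blast+
  moreover have "c u (Ss' u) \<le> b' * c u (Ss' u)"
    using assms(1) c_nonneg mult_right_mono[of 1 b' "c u (Ss' u)"] by simp
  moreover have "Cs' v \<le> b' * path_cost c (v # ys)"
    using "3.IH"(2)[OF path_v \<open>v \<in> V\<close>] .
  ultimately show ?case
    using x by (simp add: path_cost_Cons_Cons algebra_simps)
qed

theorem claim6:
  fixes V :: "'a set" and E :: "('a \<times> 'a) set" and c :: "'a \<Rightarrow> 'a \<Rightarrow> real"
    and s t :: 'a and b b' :: real
    and Ss' Sp :: "'a \<Rightarrow> 'a" and Cs' Cp :: "'a \<Rightarrow> real"
  assumes "1 < b" and "b < b'"
    and "dag_instance V E c s t"
    and "soph_agent V E c t b' Ss' Cs'"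
    and "pnaive_agent V E c t b Cs' Sp Cp"
  shows "Cp s \<le> b' * opt_cost E c t s"
proof -
  have s: "s \<in> V"
    using assms(3) unfolding dag_instance_def by blast
  obtain xs where xs: "is_path E s t xs" and opt: "opt_cost E c t s = path_cost c xs"
    using opt_cost_attained[OF assms(3) s] .
  have "Cp s \<le> Cs' s"
    using pnaive_cost_le_soph_cost[OF _ assms(2-5) s] assms(1) by simp
  also have "\<dots> \<le> b' * path_cost c xs"
    using soph_cost_le_biased_path_cost[OF _ assms(3,4) xs s] assms(1,2) by simp
  finally show ?thesis
    using opt by simp
qed

end
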